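(* Let $\mathbf X$ denote the observed data (the concatenation of $K$ lists of records, or comparison data computed from them), and let $\mathbf Z$ range over the (finite) set of coreference partition labelings of the records in $\mathbf X$. Suppose: (i) our beliefs on $\mathbf Z$ are represented by the posterior $p_{\textsc{l}}(\mathbf Z\mid \mathbf X)\propto \mathcal{L}_{\textsc{l}}(\mathbf Z\mid \mathbf X)\,p(\mathbf Z)$, coming from a record linkage model with likelihood $\mathcal{L}_{\textsc{l}}(\mathbf Z\mid \mathbf X)$ and prior $p(\mathbf Z)$, with $0<\sum_{\mathbf Z}\mathcal{L}_{\textsc{l}}(\mathbf Z\mid \mathbf X)p(\mathbf Z)<\infty$; (ii) for each $\mathbf Z$, $p_{\textsc{c}}(N\mid \boldsymbol n(\mathbf Z))$ is a probability distribution over the population size $N$ (a posterior from a capture-recapture model with likelihood $\mathcal{L}_{\textsc{c}}(N\mid \boldsymbol n(\mathbf Z))$ and prior $p(N)$), depending on $\mathbf Z$ only through the table $\boldsymbol n(\mathbf Z)$ of inclusion-pattern frequencies. Define the linkage-averaged population size posterior $$p_{\textsc{la}}(N)=\sum_{\mathbf Z} p_{\textsc{c}}(N\mid \boldsymbol n(\mathbf Z))\,p_{\textsc{l}}(\mathbf Z\mid \mathbf X).$$ Then $p_{\textsc{la}}(N)$ is the marginal posterior distribution of $N$, $p(N\mid\mathbf X)$, under the likelihood $\mathcal{L}_{\textsc{l}}(\mathbf Z\mid \mathbf X)$ and the joint prior $p(N,\mathbf Z)=p_{\textsc{c}}(N\mid \boldsymbol n(\mathbf Z))\,p(\mathbf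 Z)$, i.e. the joint posterior $p(N,\mathbf Z\mid\mathbf X)\propto \mathcal{L}_{\textsc{l}}(\mathbf Z\mid \mathbf X)\,p_{\textsc{c}}(N\mid \boldsymbol n(\mathbf Z))\,p(\mathbf Z)$ has $N$-marginal equal to $p_{\textsc{la}}(N)$.
   Context: There are $K$ lists $\mathbf X_1,\dots,\mathbf X_K$ of records, with $\mathbf X$ their concatenation containing $r$ records. A coreference partition labeling is a vector $\mathbf Z=(Z_1,\dots,Z_r)$ such that records $i,j$ refer to the same individual iff $Z_i=Z_j$. Relabeling so that labels are $1,\dots,n$ (with $n$ the number of distinct labels), define for each label $z$ and list $k$ the indicator $h_{zk}=1$ if some record $i$ in $\mathbf X_k$ has $Z_i=z$, and $0$ otherwise. An inclusion pattern is $\boldsymbol h\in\{0,1\}^K$; $\boldsymbol n(\mathbf Z)=\{n_{\boldsymbol h}\}_{\boldsymbol h\in\{0,1\}^K\setminus\{0\}^K}$ where $n_{\boldsymbol h}$ is the number of labels $z$ with $(h_{z1},\dots,h_{zK})=\boldsymbol h$. $N$ is the (unknown) total population size, a nonnegative integer. *)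

theory Defs
  imports "HOL-Analysis.Analysis"
begin

text \<open>Records are indexed by 0..<r (positions in the concatenation X of the K lists);
  lst i < K is the index of the list containing record i.
  A coreference partition labeling is Z :: nat => nat, relevant on records 0..<r,
  with labels relabelled to 1..n (n = number of distinct labels); outside the
  records it is fixed to 0 so that the set of labelings is finite.\<close>

definition labelings :: "nat \<Rightarrow> (nat \<Rightarrow> nat) set" where
  "labelings r = {Z. (\<forall>i. r \<le> i \<longrightarrow> Z i = 0) \<and>
                     Z ` {0..<r} = {1..card (Z ` {0..<r})}}"

definition incl_pattern :: "nat \<Rightarrow> nat \<Rightarrow> (nat \<Rightarrow> nat) \<Rightarrow> (nat \<Rightarrow> nat) \<Rightarrow> nat \<Rightarrow> (nat \<Rightarrow> bool)" where
  "incl_pattern K r lst Z z = (\<lambda>k. k < K \<and> (\<exists>i<r. lst i = k \<and> Z i = z))"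

definition n_table :: "nat \<Rightarrow> nat \<Rightarrow> (nat \<Rightarrow> nat) \<Rightarrow> (nat \<Rightarrow> nat) \<Rightarrow> ((nat \<Rightarrow> bool) \<Rightarrow> nat)" where
  "n_table K r lst Z = (\<lambda>h. card {z \<in> Z ` {0..<r}. incl_pattern K r lst Z z = h})"

definition linkage_post :: "nat \<Rightarrow> ((nat \<Rightarrow> nat) \<Rightarrow> real) \<Rightarrow> ((nat \<Rightarrow> nat) \<Rightarrow> real) \<Rightarrow> (nat \<Rightarrow> nat) \<Rightarrow> real" where
  "linkage_post r L pZ Z = L Z * pZ Z / (\<Sum>Z'\<in>labelings r. L Z' * pZ Z')"

definition p_LA :: "nat \<Rightarrow> nat \<Rightarrow> (nat \<Rightarrow> nat) \<Rightarrow> (((nat \<Rightarrow> bool) \<Rightarrow> nat) \<Rightarrow> nat \<Rightarrow> real)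
                     \<Rightarrow> ((nat \<Rightarrow> nat) \<Rightarrow> real) \<Rightarrow> ((nat \<Rightarrow> nat) \<Rightarrow> real) \<Rightarrow> nat \<Rightarrow> real" where
  "p_LA K r lst pc L pZ N = (\<Sum>Z\<in>labelings r. pc (n_table K r lst Z) N * linkage_post r L pZ Z)"

definition joint_prior :: "nat \<Rightarrow> nat \<Rightarrow> (nat \<Rightarrow> nat) \<Rightarrow> (((nat \<Rightarrow> bool) \<Rightarrow> nat) \<Rightarrow> nat \<Rightarrow> real)
                     \<Rightarrow> ((nat \<Rightarrow> nat) \<Rightarrow> real) \<Rightarrow> nat \<Rightarrow> (nat \<Rightarrow> nat) \<Rightarrow> real" where
  "joint_prior K r lst pc pZ N Z = pc (n_table K r lst Z) N * pZ Z"

definition joint_post :: "nat \<Rightarrow> nat \<Rightarrow> (nat \<Rightarrow> nat) \<Rightarrow> (((nat \<Rightarrow> bool) \<Rightarrow> nat) \<Rightarrow> nat \<Rightarrow> real)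
                     \<Rightarrow> ((nat \<Rightarrow> nat) \<Rightarrow> real) \<Rightarrow> ((nat \<Rightarrow> nat) \<Rightarrow> real) \<Rightarrow> nat \<Rightarrow> (nat \<Rightarrow> nat) \<Rightarrow> real" where
  "joint_post K r lst pc L pZ N Z =
     L Z * joint_prior K r lst pc pZ N Z /
     (\<Sum>Z'\<in>labelings r. \<Sum>N'. L Z' * joint_prior K r lst pc pZ N' Z')"

definition marginal_post :: "nat \<Rightarrow> nat \<Rightarrow> (nat \<Rightarrow> nat) \<Rightarrow> (((nat \<Rightarrow> bool) \<Rightarrow> nat) \<Rightarrow> nat \<Rightarrow> real)
                     \<Rightarrow> ((nat \<Rightarrow> nat) \<Rightarrow> real) \<Rightarrow> ((nat \<Rightarrow> nat) \<Rightarrow> real) \<Rightarrow> nat \<Rightarrow> real" where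
  "marginal_post K r lst pc L pZ N = (\<Sum>Z\<in>labelings r. joint_post K r lst pc L pZ N Z)"

end

theory Submission
  imports Defs
begin

text \<open>Summing the joint posterior over \<open>N\<close> first, each conditional prior
  \<open>p\<^sub>C(\<cdot> | n(Z))\<close> sums to one, so the normalising constant of the joint posterior is
  the evidence \<open>\<Sum>\<^sub>Z L(Z|X) p(Z)\<close> of the linkage model alone. Hence
  \<open>p(N, Z | X) = p\<^sub>C(N | n(Z)) p\<^sub>L(Z | X)\<close>, and summing over \<open>Z\<close> gives \<open>p\<^sub>L\<^sub>A(N)\<close>.\<close>

lemma evidence_of_conditional_prior:
  fixes w p :: "'z \<Rightarrow> real" and q :: "'z \<Rightarrow> nat \<Rightarrow> real"
  assumes "\<And>z. z \<in> S \<Longrightarrow> q z sums 1"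
  shows "(\<Sum>z\<in>S. \<Sum>n. w z * (q z n * p z)) = (\<Sum>z\<in>S. w z * p z)"
proof (rule sum.cong[OF refl])
  fix z assume "z \<in> S"
  have "(\<lambda>n. w z * (q z n * p z)) sums (w z * (1 * p z))"
    using sums_mult[OF sums_mult2[OF assms[OF \<open>z \<in> S\<close>]]] .
  then show "(\<Sum>n. w z * (q z n * p z)) = w z * p z"
    by (simp add: sums_iff)
qed

lemma marginal_of_conditional_prior_posterior:
  fixes w p :: "'z \<Rightarrow> real" and q :: "'z \<Rightarrow> nat \<Rightarrow> real"
  assumes "\<And>z. z \<in> S \<Longrightarrow> q z sums 1"
  shows "(\<Sum>z\<in>S. w z * (q z n * p z) / (\<Sum>z'\<in>S. \<Sum>n'. w z' * (q z' n' * p z')))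
       = (\<Sum>z\<in>S. q z n * (w z * p z / (\<Sum>z'\<in>S. w z' * p z')))"
  by (simp only: evidence_of_conditional_prior[OF assms]) (simp add: sum_divide_distrib mult_ac)

theorem theorem1:
  fixes K r :: nat
    and lst :: "nat \<Rightarrow> nat"
    and L pZ :: "(nat \<Rightarrow> nat) \<Rightarrow> real"
    and pc :: "((nat \<Rightarrow> bool) \<Rightarrow> nat) \<Rightarrow> nat \<Rightarrow> real"
  assumes lst: "\<And>i. i < r \<Longrightarrow> lst i < K"
    and L_nonneg: "\<And>Z. Z \<in> labelings r \<Longrightarrow> L Z \<ge> 0"
    and pZ_nonneg: "\<And>Z. Z \<in> labelings r \<Longrightarrow> pZ Z \<ge> 0"
    and pZ_sum: "(\<Sum>Z\<in>labelings r. pZ Z) = 1"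
    and evidence_pos: "0 < (\<Sum>Z\<in>labelings r. L Z * pZ Z)"
    and pc_nonneg: "\<And>Z N. Z \<in> labelings r \<Longrightarrow> pc (n_table K r lst Z) N \<ge> 0"
    and pc_sums: "\<And>Z. Z \<in> labelings r \<Longrightarrow> (\<lambda>N. pc (n_table K r lst Z) N) sums 1"
  shows "\<forall>N. marginal_post K r lst pc L pZ N = p_LA K r lst pc L pZ N"
  unfolding marginal_post_def joint_post_def joint_prior_def p_LA_def linkage_post_def
  using marginal_of_conditional_prior_posterior[where q = "\<lambda>Z. pc (n_table K r lst Z)", OF pc_sums]
  by blast

end
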